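(* Let $K$ be a twisted knotoid diagram, $s$ a state of $K$, and $G^s_K$ the associated marked ribbon graph decorated with signs, arrows and bars. Let $e_\pm$ be the numbers of positive/negative edges and $b_e=B/A$ for positive, $b_e=A/B$ for negative edges. Then \[\langle K\rangle^t=\frac{A^{e_+}B^{e_-}}{d}\,R^t_{G^s_K}(1,\mathbf b,d),\qquad \langle K\rangle^t_A=\frac{A^{e_+-e_-}}{-A^2-A^{-2}}\,R^t_{G^s_K}\big(1,\mathbf b|_{B=A^{-1}},-A^2-A^{-2}\big).\]
   Context: Write $I=[0,1]$. A twisted knotoid diagram is an immersion of $I$ into $S^2$ whose singularities are finitely many transversal double points, each decorated either as a classical crossing (with over/under information) or as a virtual crossing, and whose arcs may carry finitely many bars (short segments transverse to the curve); tail = image of $0$, head = image of $1$, oriented tail to head. Oriented state expansion: at each classical crossing there are two smoothings, the Kauffman $A$-smoothing and $B$-smoothing. Exactly one is compatible with the orientation (oriented smoothing); the other (disoriented) reverses the orientation along its arcs, and at each of the two points of reversal an arrow is placed, oriented counterclockwise around the former crossing. A state $s$ is a choice of smoothing at every classical crossing; it consists of loop components and one arc component, decorated with arrows and bars. Twisted reduction rules: planar isotopy; virtual moves (arrows and bars pass virtual crossings); two consecutive arrows on a component pointing in the same direction cancel; two adjacent bars cancel; a bar adjacent to an endpoint may be created or removed; a bar may be moved past an adjacent arrow, reversing that arrow. Every loop component reduces to $K_i$ ($i\ge 0$; a loop with $2i$ alternating arrows) or $K_{1/2}$ (a loop with one bar, no arrows), and the arc reduces to $\Lambda_i$ (an arc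 with $2i$ alternating arrows). The twisted arrow bracket is $\langle K\rangle^t=\sum_s A^{a(s)}B^{b(s)}\prod_{\text{loops }C} d\,X_C\cdot\Lambda_{j(s)}$, where $a(s),b(s)$ are the numbers of $A$-/$B$-smoothings, $X_C\in\{K_i\}\cup\{K_{1/2}\}$ is the reduced form of $C$, $K_0=\Lambda_0=1$, with commuting variables; $\langle K\rangle^t_A$ is its specialization at $B=A^{-1}$, $d=-A^2-A^{-2}$. A ribbon graph is a surface that is a union of vertex discs and edge discs, each edge disc meeting vertex discs in exactly two disjoint segments (attaching arcs); a marked vertex carries a marking (a boundary point away from attaching arcs) and an orientation of its boundary. Bars are allowed on vertex boundaries away from attaching arcs. The marked ribbon graph $G^s_K$: vertices are discs bounded by the state components of $s$, the arc component giving the marked vertex whose boundary is the arc closed up through the marking joining its endpoints, oriented tail to head. Edges correspond to classical crossings: at each smoothing site a small planar ribbon joins the two opposite arcs of the smoothing. Sign $+$ if $s$ uses the $A$-smoothing there, $-$ otherwise. Each edge gets two arrows running counterclockwise: if the smoothing is oriented, one on each edge boundary arc not meeting a vertex; if disoriented, one on each attaching arc. Bars of $K$ are kept in place. For a spanning subgraph $F\subseteq E(G)$, $k(F)$ is its number of components and $\mathrm{bc}(F)$ its number of boundary components; one boundary component passes through the marking, the others form $\partial^c(F)$. Each boundary component is reduced by the twisted reduction rules above: a circular one contributes its reduced form $X_f\in\{K_j\}\cup\{K_{1/2}\}$, the marked one contributes $\Lambda_{j(F)}$. The twisted Bollobás–Riordan polynomial is \[R^t_G(a,\mathbf b,c)=\sum_{F\subseteq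 E(G)}a^{k(F)}\Big(\prod_{e\in F}b_e\Big)c^{\mathrm{bc}(F)}\Big(\prod_{f\in\partial^c(F)}X_f\Big)\Lambda_{j(F)}.\] *)

theory Defs
  imports Main
begin

text \<open>A decoration on a curve piece: an arrow (True = pointing in the direction of
  the piece, False = against it) or a bar.\<close>
datatype deco = Arr bool | Bar

fun flipd :: "deco \<Rightarrow> deco" where
  "flipd (Arr b) = Arr (\<not> b)"
| "flipd Bar = Bar"

definition rev_word :: "deco list \<Rightarrow> deco list" where
  "rev_word w = rev (map flipd w)"

text \<open>Twisted reduction moves on the decoration word of an arc component (read from
  tail to head).\<close>
inductive lin_step :: "deco list \<Rightarrow> deco list \<Rightarrow> bool" where
  arr_cancel: "lin_step (x @ [Arr b, Arr b] @ y) (x @ y)"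
| bar_cancel: "lin_step (x @ [Bar, Bar] @ y) (x @ y)"
| bar_tail: "lin_step (Bar # y) y"
| bar_head: "lin_step (x @ [Bar]) x"
| bar_past: "lin_step (x @ [Bar, Arr b] @ y) (x @ [Arr (\<not> b), Bar] @ y)"

text \<open>Twisted reduction moves on the (cyclic, unoriented) decoration word of a loop
  component: rotation and reversal of the reading (the word is cyclic and the loop
  unoriented), and the local moves.\<close>
inductive cyc_step :: "deco list \<Rightarrow> deco list \<Rightarrow> bool" where
  rotate: "cyc_step (x @ y) (y @ x)"
| reverse: "cyc_step w (rev_word w)"
| arr_cancel: "cyc_step (x @ [Arr b, Arr b] @ y) (x @ y)"
| bar_cancel: "cyc_step (x @ [Bar, Bar] @ y) (x @ y)"
| bar_past: "cyc_step (x @ [Bar, Arr b] @ y) (x @ [Arr (\<not> b), Bar] @ y)"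

definition lin_equiv :: "deco list \<Rightarrow> deco list \<Rightarrow> bool" where
  "lin_equiv = (\<lambda>u v. lin_step u v \<or> lin_step v u)\<^sup>*\<^sup>*"

definition cyc_equiv :: "deco list \<Rightarrow> deco list \<Rightarrow> bool" where
  "cyc_equiv = (\<lambda>u v. cyc_step u v \<or> cyc_step v u)\<^sup>*\<^sup>*"

text \<open>Reduced forms: K_i (loop with 2i alternating arrows), K_{1/2} (loop with one bar),
  Lambda_j (arc with 2j alternating arrows).\<close>
datatype loopnf = KL nat | KHalf

fun nf_word :: "loopnf \<Rightarrow> deco list" where
  "nf_word (KL i) = concat (replicate i [Arr True, Arr False])"
| "nf_word KHalf = [Bar]"

definition lam_word :: "nat \<Rightarrow> deco list" where
  "lam_word j = concat (replicate j [Arr True, Arr False])"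

fun loop_val :: "(nat \<Rightarrow> 'a) \<Rightarrow> 'a \<Rightarrow> loopnf \<Rightarrow> 'a" where
  "loop_val K Kh (KL i) = K i"
| "loop_val K Kh KHalf = Kh"

text \<open>A piece is a curve segment from a point to a point carrying a word of decorations
  (read in the direction of the piece).\<close>
type_synonym 'p piece = "'p \<times> 'p \<times> deco list"

fun psrc :: "'p piece list \<Rightarrow> nat \<times> bool \<Rightarrow> 'p" where
  "psrc P (i, d) = (if d then fst (P ! i) else fst (snd (P ! i)))"

fun ptgt :: "'p piece list \<Rightarrow> nat \<times> bool \<Rightarrow> 'p" where
  "ptgt P (i, d) = (if d then fst (snd (P ! i)) else fst (P ! i))"

fun owrd :: "'p piece list \<Rightarrow> nat \<times> bool \<Rightarrow> deco list" where
  "owrd P (i, d) = (if d then snd (snd (P ! i)) else rev_word (snd (snd (P ! i))))"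

definition tword :: "'p piece list \<Rightarrow> (nat \<times> bool) list \<Rightarrow> deco list" where
  "tword P xs = concat (map (owrd P) xs)"

definition trail :: "'p piece list \<Rightarrow> (nat \<times> bool) list \<Rightarrow> bool" where
  "trail P xs \<longleftrightarrow> (\<forall>k. Suc k < length xs \<longrightarrow> ptgt P (xs ! k) = psrc P (xs ! Suc k))"

definition closed_trail :: "'p piece list \<Rightarrow> (nat \<times> bool) list \<Rightarrow> bool" where
  "closed_trail P xs \<longleftrightarrow> xs \<noteq> [] \<and> trail P xs \<and> ptgt P (last xs) = psrc P (hd xs)"

definition covers :: "(nat \<times> bool) list \<Rightarrow> nat set \<Rightarrow> bool" where
  "covers xs C \<longleftrightarrow> distinct (map fst xs) \<and> set (map fst xs) = C"

definition share :: "'p piece list \<Rightarrow> nat \<Rightarrow> nat \<Rightarrow> bool" where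
  "share P i j \<longleftrightarrow> {fst (P ! i), fst (snd (P ! i))} \<inter> {fst (P ! j), fst (snd (P ! j))} \<noteq> {}"

definition comps :: "'p piece list \<Rightarrow> nat set \<Rightarrow> nat set set" where
  "comps P I = I // ({(i, j). i \<in> I \<and> j \<in> I \<and> share P i j}\<^sup>*)"

definition loop_form :: "'p piece list \<Rightarrow> nat set \<Rightarrow> loopnf" where
  "loop_form P C = (THE r. \<exists>xs. closed_trail P xs \<and> covers xs C \<and>
                               cyc_equiv (tword P xs) (nf_word r))"

text \<open>The ends of the four half-strands at a classical crossing.\<close>
datatype xend = InO | OutO | InU | OutU
datatype pt = Tl | Hd | Cr nat xend

text \<open>A twisted knotoid diagram up to virtual moves: ncr classical crossings 0..ncr-1;
  gseq lists the 2 ncr passages through classical crossings met from tail to head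
  (crossing, True = over); csign c = True iff crossing c is positive; nbars j is the
  number of bars on the j-th arc of the curve (j = 0 .. 2 ncr; arc 0 starts at the tail,
  arc 2 ncr ends at the head).\<close>
record tkd =
  ncr :: nat
  gseq :: "(nat \<times> bool) list"
  csign :: "nat \<Rightarrow> bool"
  nbars :: "nat \<Rightarrow> nat"

definition twisted_knotoid_diagram :: "tkd \<Rightarrow> bool" where
  "twisted_knotoid_diagram D \<longleftrightarrow>
     distinct (gseq D) \<and> set (gseq D) = {..<ncr D} \<times> (UNIV :: bool set)"

definition seg_start :: "tkd \<Rightarrow> nat \<Rightarrow> pt" where
  "seg_start D j = (if j = 0 then Tl else
      (case gseq D ! (j - 1) of (c, ov) \<Rightarrow> Cr c (if ov then OutO else OutU)))"

definition seg_end :: "tkd \<Rightarrow> nat \<Rightarrow> pt" where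
  "seg_end D j = (if j = 2 * ncr D then Hd else
      (case gseq D ! j of (c, ov) \<Rightarrow> Cr c (if ov then InO else InU)))"

definition seg_pieces :: "tkd \<Rightarrow> pt piece list" where
  "seg_pieces D = map (\<lambda>j. (seg_start D j, seg_end D j, replicate (nbars D j) Bar))
                      [0..<2 * ncr D + 1]"

text \<open>Counterclockwise cyclic order of the four ends at crossing c (starting at the
  incoming over end).\<close>
definition ccw_ends :: "tkd \<Rightarrow> nat \<Rightarrow> xend list" where
  "ccw_ends D c = (if csign D c then [InO, InU, OutO, OutU] else [InO, OutU, OutO, InU])"

text \<open>Smoothing arcs at crossing c (a = True: Kauffman A-smoothing, joining the ends so
  that the two A-regions, swept by rotating the over strand counterclockwise, merge).
  Each arc joins two ccw-consecutive ends and is listed in ccw direction.\<close>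
definition smooth_arcs :: "tkd \<Rightarrow> nat \<Rightarrow> bool \<Rightarrow> (xend \<times> xend) list" where
  "smooth_arcs D c a = (let h = ccw_ends D c in
      if a then [(h ! 1, h ! 2), (h ! 3, h ! 0)] else [(h ! 0, h ! 1), (h ! 2, h ! 3)])"

definition is_in :: "xend \<Rightarrow> bool" where
  "is_in h \<longleftrightarrow> h = InO \<or> h = InU"

definition oriented_smoothing :: "tkd \<Rightarrow> nat \<Rightarrow> bool \<Rightarrow> bool" where
  "oriented_smoothing D c a \<longleftrightarrow> (\<forall>(p, q) \<in> set (smooth_arcs D c a). is_in p \<noteq> is_in q)"

text \<open>The pieces of the state S (S = set of A-smoothed crossings): the arcs of the
  diagram plus the smoothing arcs; a disoriented smoothing arc carries one arrow
  pointing counterclockwise around the former crossing.\<close>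
definition state_pieces :: "tkd \<Rightarrow> nat set \<Rightarrow> pt piece list" where
  "state_pieces D S = seg_pieces D @
     concat (map (\<lambda>c. map (\<lambda>(p, q). (Cr c p, Cr c q,
                     if oriented_smoothing D c (c \<in> S) then [] else [Arr True]))
                   (smooth_arcs D c (c \<in> S))) [0..<ncr D])"

definition state_comps :: "tkd \<Rightarrow> nat set \<Rightarrow> nat set set" where
  "state_comps D S = comps (state_pieces D S) {..<length (state_pieces D S)}"

text \<open>Piece 0 is the arc leaving the tail; the arc component is the one containing it.\<close>
definition state_loops :: "tkd \<Rightarrow> nat set \<Rightarrow> nat set set" where
  "state_loops D S = {C \<in> state_comps D S. 0 \<notin> C}"

definition state_arc :: "tkd \<Rightarrow> nat set \<Rightarrow> nat set" where
  "state_arc D S = (THE C. C \<in> state_comps D S \<and> 0 \<in> C)"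

definition arc_index :: "pt piece list \<Rightarrow> nat set \<Rightarrow> nat" where
  "arc_index P C = (THE j. \<exists>xs. xs \<noteq> [] \<and> trail P xs \<and> covers xs C \<and>
        psrc P (hd xs) = Tl \<and> ptgt P (last xs) = Hd \<and> lin_equiv (tword P xs) (lam_word j))"

text \<open>Twisted arrow bracket, evaluated in a field: K i, Kh, L j are the values of
  K_i, K_{1/2}, Lambda_j.\<close>
definition tbracket :: "tkd \<Rightarrow> 'a::field \<Rightarrow> 'a \<Rightarrow> 'a \<Rightarrow> (nat \<Rightarrow> 'a) \<Rightarrow> 'a \<Rightarrow> (nat \<Rightarrow> 'a) \<Rightarrow> 'a" where
  "tbracket D A B d K Kh L =
     (\<Sum>S\<in>Pow {..<ncr D}.
        A ^ card S * B ^ (ncr D - card S) *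
        (\<Prod>C\<in>state_loops D S. d * loop_val K Kh (loop_form (state_pieces D S) C)) *
        L (arc_index (state_pieces D S) (state_arc D S)))"

definition tbracketA :: "tkd \<Rightarrow> 'a::field \<Rightarrow> (nat \<Rightarrow> 'a) \<Rightarrow> 'a \<Rightarrow> (nat \<Rightarrow> 'a) \<Rightarrow> 'a" where
  "tbracketA D A K Kh L = tbracket D A (inverse A) (- (A ^ 2) - inverse (A ^ 2)) K Kh L"

text \<open>Combinatorial model: the boundary of the ribbon graph is cut into pieces between
  corner points (endpoints of attaching arcs).  Kinds: PV = piece of a vertex boundary
  between attaching arcs; PM = the (decoration-free) piece of the marked vertex boundary
  carrying the marking, directed along the boundary orientation; PA e = attaching arc of
  edge e; PS e = edge-boundary arc of e not meeting a vertex.\<close>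
datatype 'e pkind = PV | PM | PA 'e | PS 'e

record ('e, 'p) mrg =
  rg_edges :: "'e set"
  rg_sign :: "'e \<Rightarrow> bool"
  rg_pieces :: "('e pkind \<times> 'p piece) list"

definition rg_P :: "('e, 'p) mrg \<Rightarrow> 'p piece list" where
  "rg_P G = map snd (rg_pieces G)"

text \<open>Boundary of the spanning ribbon subgraph with edge set F.\<close>
definition bdry_idx :: "('e, 'p) mrg \<Rightarrow> 'e set \<Rightarrow> nat set" where
  "bdry_idx G F = {i. i < length (rg_pieces G) \<and>
     (case fst (rg_pieces G ! i) of PV \<Rightarrow> True | PM \<Rightarrow> True | PA e \<Rightarrow> e \<notin> F | PS e \<Rightarrow> e \<in> F)}"

text \<open>Pieces whose endpoints lie in the same component of the surface (V union F).\<close>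
definition surf_idx :: "('e, 'p) mrg \<Rightarrow> 'e set \<Rightarrow> nat set" where
  "surf_idx G F = {i. i < length (rg_pieces G) \<and>
     (case fst (rg_pieces G ! i) of PV \<Rightarrow> True | PM \<Rightarrow> True | PA e \<Rightarrow> True | PS e \<Rightarrow> e \<in> F)}"

definition rg_points :: "('e, 'p) mrg \<Rightarrow> 'p set" where
  "rg_points G = {p. \<exists>i < length (rg_P G). p = fst (rg_P G ! i) \<or> p = fst (snd (rg_P G ! i))}"

definition rg_k :: "('e, 'p) mrg \<Rightarrow> 'e set \<Rightarrow> nat" where
  "rg_k G F = card (rg_points G //
     (let R = {(fst (rg_P G ! i), fst (snd (rg_P G ! i))) | i. i \<in> surf_idx G F}
      in (R \<union> R\<inverse>)\<^sup>*))"

definition bdry_comps :: "('e, 'p) mrg \<Rightarrow> 'e set \<Rightarrow> nat set set" where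
  "bdry_comps G F = comps (rg_P G) (bdry_idx G F)"

definition mark_idx :: "('e, 'p) mrg \<Rightarrow> nat" where
  "mark_idx G = (THE i. i < length (rg_pieces G) \<and> fst (rg_pieces G ! i) = PM)"

definition circ_comps :: "('e, 'p) mrg \<Rightarrow> 'e set \<Rightarrow> nat set set" where
  "circ_comps G F = {C \<in> bdry_comps G F. mark_idx G \<notin> C}"

text \<open>The marked boundary component, cut open at the marking and read along the
  orientation of the marked vertex.\<close>
definition marked_index :: "('e, 'p) mrg \<Rightarrow> 'e set \<Rightarrow> nat" where
  "marked_index G F = (THE j. \<exists>C xs. C \<in> bdry_comps G F \<and> mark_idx G \<in> C \<and>
      closed_trail (rg_P G) xs \<and> covers xs C \<and> hd xs = (mark_idx G, True) \<and>
      lin_equiv (tword (rg_P G) (tl xs)) (lam_word j))"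

definition Rt :: "('e, 'p) mrg \<Rightarrow> 'a::field \<Rightarrow> ('e \<Rightarrow> 'a) \<Rightarrow> 'a \<Rightarrow>
                  (nat \<Rightarrow> 'a) \<Rightarrow> 'a \<Rightarrow> (nat \<Rightarrow> 'a) \<Rightarrow> 'a" where
  "Rt G a b c K Kh L =
     (\<Sum>F\<in>Pow (rg_edges G).
        a ^ rg_k G F * (\<Prod>e\<in>F. b e) * c ^ card (bdry_comps G F) *
        (\<Prod>f\<in>circ_comps G F. loop_val K Kh (loop_form (rg_P G) f)) *
        L (marked_index G F))"

definition epos :: "('e, 'p) mrg \<Rightarrow> nat" where
  "epos G = card {e \<in> rg_edges G. rg_sign G e}"

definition eneg :: "('e, 'p) mrg \<Rightarrow> nat" where
  "eneg G = card {e \<in> rg_edges G. \<not> rg_sign G e}"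

definition bvec :: "('e, 'p) mrg \<Rightarrow> 'a::field \<Rightarrow> 'a \<Rightarrow> 'e \<Rightarrow> 'a" where
  "bvec G A B e = (if rg_sign G e then B / A else A / B)"

text \<open>The marked ribbon graph of the state S of D: vertices bounded by the state
  components (the arc closed up through the marking piece Hd -> Tl), one edge per
  crossing, attaching arcs = arcs of the chosen smoothing, free edge-boundary arcs = arcs
  of the other smoothing; arrows (ccw around the crossing) on the free arcs if the chosen
  smoothing is oriented, on the attaching arcs otherwise; bars kept in place.\<close>
definition GsK :: "tkd \<Rightarrow> nat set \<Rightarrow> (nat, pt) mrg" where
  "GsK D S = \<lparr> rg_edges = {..<ncr D}, rg_sign = (\<lambda>c. c \<in> S),
     rg_pieces = [(PM, (Hd, Tl, []))] @ map (\<lambda>p. (PV, p)) (seg_pieces D) @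
       concat (map (\<lambda>c.
          map (\<lambda>(p, q). (PA c, (Cr c p, Cr c q,
                 if oriented_smoothing D c (c \<in> S) then [] else [Arr True])))
              (smooth_arcs D c (c \<in> S)) @
          map (\<lambda>(p, q). (PS c, (Cr c p, Cr c q,
                 if oriented_smoothing D c (c \<in> S) then [Arr True] else [])))
              (smooth_arcs D c (c \<notin> S))) [0..<ncr D]) \<rparr>"

end

theory Submission
  imports Defs
begin

text \<open>Fix the state \<open>S\<close> and a spanning subgraph \<open>F\<close> of \<open>G\<^sup>s\<^sub>K\<close>.  Away from the
  marking, the boundary of the ribbon subgraph \<open>V \<union> F\<close> is the state \<open>S \<triangle> F\<close> of \<open>K\<close>: at an
  edge of \<open>F\<close> the attaching arcs (the smoothing chosen by \<open>S\<close>) are replaced by the free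
  edge-boundary arcs (the other smoothing), with the same arrows and bars.  The marking
  piece joins head and tail, so it closes up the arc component of the state, which the
  parity of the endpoint degrees forces to contain both the tail and the head piece.
  Hence \<open>bc(F)\<close> is one more than the number of loops of \<open>S \<triangle> F\<close>, the circular boundary
  components reduce exactly as those loops and the marked one as the arc.  Since the
  monomial \<open>A^a(S \<triangle> F) B^b(S \<triangle> F)\<close> equals \<open>A^e\<^sub>+ B^e\<^sub>-\<close> times the product of the
  \<open>b\<^sub>e\<close> over \<open>F\<close>, reindexing the state sum by \<open>F \<mapsto> S \<triangle> F\<close> gives the formula.\<close>

section \<open>Connected components of a family of pieces\<close>

definition share_rel :: "'p piece list \<Rightarrow> nat set \<Rightarrow> (nat \<times> nat) set" where
  "share_rel P I = {(i, j). i \<in> I \<and> j \<in> I \<and> share P i j}"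

lemma comps_eq_share_classes: "comps P I = (\<lambda>x. (share_rel P I)\<^sup>* `` {x}) ` I"
  by (auto simp: comps_def quotient_def share_rel_def)

lemma share_commute: "share P i j = share P j i"
  by (auto simp: share_def)

lemma share_rel_rtrancl_sym: "(x, y) \<in> (share_rel P I)\<^sup>* \<Longrightarrow> (y, x) \<in> (share_rel P I)\<^sup>*"
proof -
  have "sym (share_rel P I)"
    by (auto simp: sym_def share_rel_def share_commute)
  then show "(x, y) \<in> (share_rel P I)\<^sup>* \<Longrightarrow> (y, x) \<in> (share_rel P I)\<^sup>*"
    by (meson sym_rtrancl symD)
qed

lemma share_rel_rtrancl_into: "(x, y) \<in> (share_rel P I)\<^sup>* \<Longrightarrow> y = x \<or> y \<in> I"
  by (induction rule: rtrancl_induct) (auto simp: share_rel_def)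

lemma share_rel_rtrancl_mono: "J \<subseteq> J' \<Longrightarrow> (share_rel P J)\<^sup>* \<subseteq> (share_rel P J')\<^sup>*"
  by (rule rtrancl_mono) (auto simp: share_rel_def)

lemma share_class_subset: "x \<in> I \<Longrightarrow> (share_rel P I)\<^sup>* `` {x} \<subseteq> I"
  using share_rel_rtrancl_into by fastforce

lemma share_class_eq:
  "(x, y) \<in> (share_rel P I)\<^sup>* \<Longrightarrow> (share_rel P I)\<^sup>* `` {x} = (share_rel P I)\<^sup>* `` {y}"
  using share_rel_rtrancl_sym by (meson Image_singleton_iff rtrancl_trans subset_antisym subsetI)

lemma comps_subset: "C \<in> comps P I \<Longrightarrow> C \<subseteq> I"
  by (auto simp: comps_eq_share_classes dest: share_class_subset)

lemma finite_comps: "finite I \<Longrightarrow> finite (comps P I)"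
  by (simp add: comps_eq_share_classes)

context
  fixes Q :: "'p piece list" and J C0 :: "nat set" and m j0 :: nat
  assumes C0_comp: "C0 \<in> comps Q J"
    and j0: "j0 \<in> C0" "share Q m j0"
    and shares_in_C0: "\<And>j. j \<in> J \<Longrightarrow> share Q m j \<Longrightarrow> j \<in> C0"
begin

lemma attached_comp_subset: "C0 \<subseteq> J"
  using C0_comp by (rule comps_subset)

lemma attached_comp_closed: "y \<in> C0 \<Longrightarrow> (y, z) \<in> (share_rel Q J)\<^sup>* \<Longrightarrow> z \<in> C0"
  using C0_comp by (auto simp: comps_eq_share_classes intro: rtrancl_trans)

lemma attached_comp_connected: "y \<in> C0 \<Longrightarrow> z \<in> C0 \<Longrightarrow> (y, z) \<in> (share_rel Q J)\<^sup>*"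
proof -
  assume yz: "y \<in> C0" "z \<in> C0"
  obtain x where "C0 = (share_rel Q J)\<^sup>* `` {x}"
    using C0_comp by (auto simp: comps_eq_share_classes)
  then have "(y, x) \<in> (share_rel Q J)\<^sup>*" "(x, z) \<in> (share_rel Q J)\<^sup>*"
    using yz share_rel_rtrancl_sym by auto
  then show ?thesis by (rule rtrancl_trans)
qed

lemma share_class_eq_attached_iff: "x \<in> J \<Longrightarrow> (share_rel Q J)\<^sup>* `` {x} = C0 \<longleftrightarrow> x \<in> C0"
  using attached_comp_closed attached_comp_connected by blast

lemma share_class_insert_outside:
  assumes "x \<in> J" "x \<notin> C0"
  shows "(share_rel Q (insert m J))\<^sup>* `` {x} = (share_rel Q J)\<^sup>* `` {x}"
proof -
  have "(x, y) \<in> (share_rel Q J)\<^sup>* \<and> y \<notin> C0 \<and> y \<in> J"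
    if "(x, y) \<in> (share_rel Q (insert m J))\<^sup>*" for y
    using that
  proof (induction rule: rtrancl_induct)
    case (step y z)
    then have y: "(x, y) \<in> (share_rel Q J)\<^sup>*" "y \<notin> C0" "y \<in> J" by auto
    have z: "z \<in> J" "share Q y z"
      using step(2) y shares_in_C0 share_commute by (auto simp: share_rel_def)
    then have xz: "(x, z) \<in> (share_rel Q J)\<^sup>*"
      using y by (auto simp: share_rel_def intro: rtrancl.rtrancl_into_rtrancl)
    have "z \<notin> C0"
      using attached_comp_closed share_rel_rtrancl_sym[OF xz] assms(2) by blast
    then show ?case using xz z by simp
  qed (use assms in simp)
  then show ?thesis
    using share_rel_rtrancl_mono[of J "insert m J" Q] by auto
qed

lemma share_class_insert_attached:
  assumes "x \<in> insert m C0"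
  shows "(share_rel Q (insert m J))\<^sup>* `` {x} = insert m C0"
proof -
  have closed: "y \<in> insert m C0" if "(x, y) \<in> (share_rel Q (insert m J))\<^sup>*" for y
    using that
  proof (induction rule: rtrancl_induct)
    case (step y z)
    show ?case
    proof (cases "y = m")
      case True
      then show ?thesis using step shares_in_C0 by (auto simp: share_rel_def)
    next
      case False
      then have "y \<in> C0" using step by simp
      moreover have "z = m \<or> (y, z) \<in> share_rel Q J"
        using step(2) attached_comp_subset \<open>y \<in> C0\<close> by (auto simp: share_rel_def)
      ultimately show ?thesis using attached_comp_closed by blast
    qed
  qed (use assms in simp)
  have from_m: "(m, y) \<in> (share_rel Q (insert m J))\<^sup>*" if "y \<in> insert m C0" for y
  proof -
    have "(m, j0) \<in> share_rel Q (insert m J)"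
      using attached_comp_subset j0 by (auto simp: share_rel_def)
    moreover have "y \<in> C0 \<Longrightarrow> (j0, y) \<in> (share_rel Q (insert m J))\<^sup>*"
      using attached_comp_connected[OF j0(1)] share_rel_rtrancl_mono[of J "insert m J" Q] by blast
    ultimately show ?thesis
      using that by (auto intro: converse_rtrancl_into_rtrancl)
  qed
  have "(x, y) \<in> (share_rel Q (insert m J))\<^sup>*" if "y \<in> insert m C0" for y
    using from_m[OF assms] from_m[OF that] share_rel_rtrancl_sym by (meson rtrancl_trans)
  then show ?thesis using closed by auto
qed

lemma comps_insert_attached: "comps Q (insert m J) = insert (insert m C0) (comps Q J - {C0})"
proof (intro set_eqI iffI)
  fix X
  assume "X \<in> comps Q (insert m J)"
  then obtain x where x: "x \<in> insert m J" "X = (share_rel Q (insert m J))\<^sup>* `` {x}"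
    by (auto simp: comps_eq_share_classes)
  show "X \<in> insert (insert m C0) (comps Q J - {C0})"
  proof (cases "x \<in> insert m C0")
    case True
    then show ?thesis using share_class_insert_attached x by simp
  next
    case False
    then show ?thesis
      using x share_class_insert_outside share_class_eq_attached_iff by (auto simp: comps_eq_share_classes)
  qed
next
  fix X
  assume "X \<in> insert (insert m C0) (comps Q J - {C0})"
  then consider "X = insert m C0"
    | x where "x \<in> J" "x \<notin> C0" "X = (share_rel Q J)\<^sup>* `` {x}"
    using share_class_eq_attached_iff by (auto simp: comps_eq_share_classes)
  then show "X \<in> comps Q (insert m J)"
  proof cases
    case 1
    then show ?thesis
      using share_class_insert_attached[of m] by (auto simp: comps_eq_share_classes)
  next
    case 2
    then have "X = (share_rel Q (insert m J))\<^sup>* `` {x}"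
      using share_class_insert_outside by simp
    then show ?thesis
      using \<open>x \<in> J\<close> by (auto simp: comps_eq_share_classes)
  qed
qed

end

lemma trail_Cons: "trail P (x # xs) \<longleftrightarrow> (xs = [] \<or> ptgt P x = psrc P (hd xs)) \<and> trail P xs"
proof
  assume t: "trail P (x # xs)"
  have "xs = [] \<or> ptgt P x = psrc P (hd xs)"
    using t[unfolded trail_def, rule_format, of 0] by (cases xs) auto
  moreover have "trail P xs"
    unfolding trail_def using t[unfolded trail_def, rule_format, of "Suc _"] by simp
  ultimately show "(xs = [] \<or> ptgt P x = psrc P (hd xs)) \<and> trail P xs" by blast
next
  assume a: "(xs = [] \<or> ptgt P x = psrc P (hd xs)) \<and> trail P xs"
  show "trail P (x # xs)" unfolding trail_def
  proof (intro allI impI)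
    fix k
    assume k: "Suc k < length (x # xs)"
    show "ptgt P ((x # xs) ! k) = psrc P ((x # xs) ! Suc k)"
    proof (cases k)
      case 0
      then show ?thesis using a k by (cases xs) auto
    next
      case (Suc k')
      then show ?thesis using a k by (simp add: trail_def)
    qed
  qed
qed

locale piece_embedding =
  fixes P Q :: "'p piece list" and I :: "nat set" and \<sigma> :: "nat \<Rightarrow> nat"
  assumes inj: "inj_on \<sigma> I"
    and nth_eq: "\<And>i. i \<in> I \<Longrightarrow> Q ! \<sigma> i = P ! i"
begin

definition lift :: "nat \<times> bool \<Rightarrow> nat \<times> bool" where
  "lift x = (\<sigma> (fst x), snd x)"

lemma share_image: "i \<in> I \<Longrightarrow> j \<in> I \<Longrightarrow> share Q (\<sigma> i) (\<sigma> j) = share P i j"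
  by (simp add: share_def nth_eq)

lemma share_rel_rtrancl_image:
  "(x, y) \<in> (share_rel P I)\<^sup>* \<Longrightarrow> (\<sigma> x, \<sigma> y) \<in> (share_rel Q (\<sigma> ` I))\<^sup>*"
proof (induction rule: rtrancl_induct)
  case (step y z)
  then have "(\<sigma> y, \<sigma> z) \<in> share_rel Q (\<sigma> ` I)"
    by (auto simp: share_rel_def share_image)
  with step show ?case by (meson rtrancl.rtrancl_into_rtrancl)
qed simp

lemma share_rel_rtrancl_preimage:
  "(a, b) \<in> (share_rel Q (\<sigma> ` I))\<^sup>* \<Longrightarrow> a = \<sigma> x \<Longrightarrow> x \<in> I \<Longrightarrow>
     \<exists>y. b = \<sigma> y \<and> (x, y) \<in> (share_rel P I)\<^sup>*"
proof (induction rule: rtrancl_induct)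
  case (step y z)
  then obtain y' where y': "y = \<sigma> y'" "(x, y') \<in> (share_rel P I)\<^sup>*" by auto
  have "y' \<in> I" using share_rel_rtrancl_into[OF y'(2)] step.prems by auto
  from step(2) obtain z' where z': "z = \<sigma> z'" "z' \<in> I" "share P y' z'"
    using y' \<open>y' \<in> I\<close> share_image by (auto simp: share_rel_def)
  then have "(y', z') \<in> share_rel P I" using \<open>y' \<in> I\<close> by (simp add: share_rel_def)
  with y'(2) have "(x, z') \<in> (share_rel P I)\<^sup>*" by (rule rtrancl.rtrancl_into_rtrancl)
  with z'(1) show ?case by blast
qed auto

lemma share_class_image:
  "x \<in> I \<Longrightarrow> (share_rel Q (\<sigma> ` I))\<^sup>* `` {\<sigma> x} = \<sigma> ` ((share_rel P I)\<^sup>* `` {x})"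
  using share_rel_rtrancl_image share_rel_rtrancl_preimage by fastforce

lemma comps_image: "comps Q (\<sigma> ` I) = (\<lambda>C. \<sigma> ` C) ` comps P I"
  by (auto simp: comps_eq_share_classes share_class_image image_image)

lemma inj_on_image_comps: "inj_on (\<lambda>C. \<sigma> ` C) (comps P I)"
  by (rule inj_onI) (metis comps_subset inj inj_on_image_eq_iff)

lemma psrc_lift: "fst x \<in> I \<Longrightarrow> psrc Q (lift x) = psrc P x"
  by (cases x) (simp add: lift_def nth_eq)

lemma ptgt_lift: "fst x \<in> I \<Longrightarrow> ptgt Q (lift x) = ptgt P x"
  by (cases x) (simp add: lift_def nth_eq)

lemma tword_lift: "set (map fst xs) \<subseteq> I \<Longrightarrow> tword Q (map lift xs) = tword P xs"
  by (induction xs) (auto simp: tword_def lift_def nth_eq)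

lemma trail_lift: "set (map fst xs) \<subseteq> I \<Longrightarrow> trail Q (map lift xs) = trail P xs"
proof -
  assume "set (map fst xs) \<subseteq> I"
  then have "\<And>k. k < length xs \<Longrightarrow> fst (xs ! k) \<in> I" using nth_mem by fastforce
  then show ?thesis unfolding trail_def
    by (auto simp: psrc_lift ptgt_lift Suc_lessD)
qed

lemma closed_trail_lift:
  "set (map fst xs) \<subseteq> I \<Longrightarrow> closed_trail Q (map lift xs) = closed_trail P xs"
proof (cases "xs = []")
  case False
  assume "set (map fst xs) \<subseteq> I"
  moreover have "fst (last xs) \<in> set (map fst xs)" "fst (hd xs) \<in> set (map fst xs)"
    using False by auto
  ultimately show ?thesis unfolding closed_trail_def using False
    by (simp add: trail_lift last_map hd_map psrc_lift ptgt_lift subsetD)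
qed (simp add: closed_trail_def)

lemma covers_lift:
  assumes "set (map fst xs) \<subseteq> I" "C \<subseteq> I"
  shows "covers (map lift xs) (\<sigma> ` C) = covers xs C"
proof -
  have "inj_on \<sigma> (set (map fst xs))" using assms inj inj_on_subset by blast
  then have "distinct (map \<sigma> (map fst xs)) = distinct (map fst xs)"
    using distinct_map[of \<sigma> "map fst xs"] by blast
  moreover have "(\<sigma> ` set (map fst xs) = \<sigma> ` C) = (set (map fst xs) = C)"
    using assms inj by (simp add: inj_on_image_eq_iff)
  moreover have "map fst (map lift xs) = map \<sigma> (map fst xs)"
    by (simp add: lift_def)
  ultimately show ?thesis unfolding covers_def by (simp only: set_map)
qed

lemma obtain_lift:
  assumes "set (map fst ys) \<subseteq> \<sigma> ` I"
  obtains xs where "ys = map lift xs" "set (map fst xs) \<subseteq> I"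
proof
  let ?xs = "map (\<lambda>y. (inv_into I \<sigma> (fst y), snd y)) ys"
  show "ys = map lift ?xs" "set (map fst ?xs) \<subseteq> I"
    using assms by (auto simp: lift_def f_inv_into_f inv_into_into intro!: map_idI[symmetric])
qed

lemma loop_form_image: "C \<subseteq> I \<Longrightarrow> loop_form Q (\<sigma> ` C) = loop_form P C"
proof -
  assume C: "C \<subseteq> I"
  have "(\<exists>ys. closed_trail Q ys \<and> covers ys (\<sigma> ` C) \<and> cyc_equiv (tword Q ys) w)
      \<longleftrightarrow> (\<exists>xs. closed_trail P xs \<and> covers xs C \<and> cyc_equiv (tword P xs) w)" for w
  proof
    assume "\<exists>ys. closed_trail Q ys \<and> covers ys (\<sigma> ` C) \<and> cyc_equiv (tword Q ys) w"
    then obtain ys where ys: "closed_trail Q ys" "covers ys (\<sigma> ` C)" "cyc_equiv (tword Q ys) w"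
      by blast
    then have "set (map fst ys) \<subseteq> \<sigma> ` I" using C by (auto simp: covers_def)
    then obtain xs where "ys = map lift xs" "set (map fst xs) \<subseteq> I" by (rule obtain_lift)
    then show "\<exists>xs. closed_trail P xs \<and> covers xs C \<and> cyc_equiv (tword P xs) w"
      using ys C by (auto simp: closed_trail_lift covers_lift tword_lift)
  next
    assume "\<exists>xs. closed_trail P xs \<and> covers xs C \<and> cyc_equiv (tword P xs) w"
    then obtain xs where xs: "closed_trail P xs" "covers xs C" "cyc_equiv (tword P xs) w"
      by blast
    then have "set (map fst xs) \<subseteq> I" using C by (auto simp: covers_def)
    then show "\<exists>ys. closed_trail Q ys \<and> covers ys (\<sigma> ` C) \<and> cyc_equiv (tword Q ys) w"
      using xs C by (intro exI[of _ "map lift xs"]) (auto simp: closed_trail_lift covers_lift tword_lift)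
  qed
  then show ?thesis unfolding loop_form_def by simp
qed

end

section \<open>Parity of endpoint degrees\<close>

definition ends_at :: "'p piece list \<Rightarrow> 'p \<Rightarrow> (nat \<times> bool) set" where
  "ends_at P p = {x \<in> {..<length P} \<times> UNIV. psrc P x = p}"

lemma even_card_odd_fibres:
  assumes "finite E" "even (card E)"
  shows "even (card {p \<in> f ` E. odd (card {x \<in> E. f x = p})})"
proof -
  have "card E = (\<Sum>p\<in>f ` E. card {x \<in> E. f x = p})"
    using sum.image_gen[OF assms(1), of "\<lambda>_. 1 :: nat" f] by simp
  with assms show ?thesis by (simp add: even_sum_iff)
qed

text \<open>Every piece has two endpoints, so the component of the piece at the only odd-degree
  point \<open>t\<close> must also contain an endpoint of odd degree, which can only be \<open>h\<close>.\<close>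

lemma unique_ends_connected:
  fixes P :: "'p piece list"
  assumes t: "ends_at P t = {(x0, b0)}" and h: "ends_at P h = {(y0, b1)}"
    and even: "\<And>p. p \<noteq> t \<Longrightarrow> p \<noteq> h \<Longrightarrow> even (card (ends_at P p))"
    and "t \<noteq> h"
  shows "(x0, y0) \<in> (share_rel P {..<length P})\<^sup>*"
proof (rule ccontr)
  assume not_conn: "(x0, y0) \<notin> (share_rel P {..<length P})\<^sup>*"
  define C where "C = (share_rel P {..<length P})\<^sup>* `` {x0}"
  define E where "E = C \<times> (UNIV :: bool set)"
  have "(x0, b0) \<in> ends_at P t" using t by simp
  then have x0: "x0 \<in> {..<length P}" by (simp add: ends_at_def)
  have CU: "C \<subseteq> {..<length P}" unfolding C_def using share_class_subset x0 by metis
  have "finite C" using CU finite_subset by blast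
  then have finE: "finite E" by (simp add: E_def)
  have fibre: "{x \<in> E. psrc P x = p} = ends_at P p" if "p \<in> psrc P ` E" for p
  proof
    show "{x \<in> E. psrc P x = p} \<subseteq> ends_at P p"
      using CU by (auto simp: E_def ends_at_def)
    obtain i b where ib: "(i, b) \<in> E" "psrc P (i, b) = p" using \<open>p \<in> psrc P ` E\<close> by auto
    show "ends_at P p \<subseteq> {x \<in> E. psrc P x = p}"
    proof (clarify)
      fix j b' assume "(j, b') \<in> ends_at P p"
      then have j: "j < length P" "psrc P (j, b') = psrc P (i, b)" using ib by (auto simp: ends_at_def)
      then have "share P i j" by (cases b; cases b') (auto simp: share_def)
      then have "(i, j) \<in> share_rel P {..<length P}"
        using ib(1) j(1) CU by (auto simp: share_rel_def E_def)
      moreover have "(x0, i) \<in> (share_rel P {..<length P})\<^sup>*" using ib(1) by (simp add: E_def C_def)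
      ultimately have "j \<in> C" unfolding C_def by (meson Image_singleton_iff rtrancl.rtrancl_into_rtrancl)
      then show "(j, b') \<in> E \<and> psrc P (j, b') = p" using j ib by (simp add: E_def)
    qed
  qed
  have tE: "t \<in> psrc P ` E"
  proof -
    have "(x0, b0) \<in> ends_at P t" using t by simp
    then have "psrc P (x0, b0) = t" by (simp add: ends_at_def)
    moreover have "(x0, b0) \<in> E" by (simp add: E_def C_def)
    ultimately show ?thesis by (metis image_eqI)
  qed
  have hE: "h \<notin> psrc P ` E"
  proof
    assume "h \<in> psrc P ` E"
    then have "(y0, b1) \<in> {x \<in> E. psrc P x = h}" using fibre h by simp
    with not_conn show False by (simp add: E_def C_def)
  qed
  have "{p \<in> psrc P ` E. odd (card {x \<in> E. psrc P x = p})} = {t}"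
  proof
    show "{p \<in> psrc P ` E. odd (card {x \<in> E. psrc P x = p})} \<subseteq> {t}"
    proof
      fix p
      assume "p \<in> {p \<in> psrc P ` E. odd (card {x \<in> E. psrc P x = p})}"
      then have pE: "p \<in> psrc P ` E" and "odd (card {x \<in> E. psrc P x = p})" by simp_all
      then have "odd (card (ends_at P p))" using fibre[OF pE] by simp
      moreover have "p \<noteq> h" using pE hE by blast
      ultimately show "p \<in> {t}" using even by blast
    qed
    show "{t} \<subseteq> {p \<in> psrc P ` E. odd (card {x \<in> E. psrc P x = p})}"
      using fibre[OF tE] tE t by simp
  qed
  moreover have "even (card E)" by (simp add: E_def card_cartesian_product)
  ultimately show False using even_card_odd_fibres[OF finE, of "psrc P"] by simp
qed

lemma nth_concat_map_const_length:
  assumes "\<And>x. x \<in> set xs \<Longrightarrow> length (h x) = m" "c < length xs" "k < m"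
  shows "concat (map h xs) ! (m * c + k) = h (xs ! c) ! k"
  using assms
proof (induction xs arbitrary: c)
  case (Cons x xs)
  show ?case
  proof (cases c)
    case 0
    then show ?thesis using Cons.prems by (simp add: nth_append)
  next
    case (Suc c')
    then have "m * c + k = m + (m * c' + k)" by simp
    then show ?thesis using Cons Suc by (simp add: nth_append)
  qed
qed simp

lemma length_concat_map_const_length:
  "(\<And>x. x \<in> set xs \<Longrightarrow> length (h x) = m) \<Longrightarrow> length (concat (map h xs)) = m * length xs"
  by (induction xs) auto

lemma length_smooth_arcs [simp]: "length (smooth_arcs D c a) = 2"
  by (simp add: smooth_arcs_def Let_def)

lemma length_seg_pieces [simp]: "length (seg_pieces D) = 2 * ncr D + 1"
  by (simp add: seg_pieces_def)

lemma nth_seg_pieces: "j < 2 * ncr D + 1 \<Longrightarrow>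
    seg_pieces D ! j = (seg_start D j, seg_end D j, replicate (nbars D j) Bar)"
  by (simp add: seg_pieces_def del: upt_Suc)

definition smoothing_piece :: "tkd \<Rightarrow> nat \<Rightarrow> bool \<Rightarrow> nat \<Rightarrow> pt piece" where
  "smoothing_piece D c a k = (case smooth_arcs D c a ! k of (p, q) \<Rightarrow>
      (Cr c p, Cr c q, if oriented_smoothing D c a then [] else [Arr True]))"

lemma oriented_smoothing_Not: "oriented_smoothing D c (\<not> a) \<longleftrightarrow> \<not> oriented_smoothing D c a"
  by (cases "csign D c"; cases a)
    (simp_all add: oriented_smoothing_def smooth_arcs_def ccw_ends_def Let_def is_in_def)

lemma length_state_pieces [simp]: "length (state_pieces D S) = 4 * ncr D + 1"
  by (simp add: state_pieces_def length_concat_map_const_length[where m = 2])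

lemma nth_state_pieces_seg: "j < 2 * ncr D + 1 \<Longrightarrow> state_pieces D S ! j = seg_pieces D ! j"
  by (simp add: state_pieces_def nth_append)

lemma nth_state_pieces_smoothing: "c < ncr D \<Longrightarrow> k < 2 \<Longrightarrow>
    state_pieces D S ! (2 * ncr D + 1 + (2 * c + k)) = smoothing_piece D c (c \<in> S) k"
proof -
  assume ck: "c < ncr D" "k < 2"
  let ?h = "\<lambda>c. map (\<lambda>(p, q). (Cr c p, Cr c q,
                     if oriented_smoothing D c (c \<in> S) then [] else [Arr True]))
                   (smooth_arcs D c (c \<in> S))"
  have "concat (map ?h [0..<ncr D]) ! (2 * c + k) = ?h ([0..<ncr D] ! c) ! k"
    by (rule nth_concat_map_const_length) (use ck in auto)
  then show ?thesis using ck
    by (simp add: state_pieces_def nth_append smoothing_piece_def split: prod.splits)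
qed

lemma state_index_cases:
  assumes "(i::nat) < 4 * n + 1"
  obtains "i < 2 * n + 1" | c k where "c < n" "k < 2" "i = 2 * n + 1 + (2 * c + k)"
proof (cases "i < 2 * n + 1")
  case False
  define r where "r = i - (2 * n + 1)"
  have "r div 2 < n" "r mod 2 < 2" "i = 2 * n + 1 + (2 * (r div 2) + r mod 2)"
    using False assms by (simp_all add: r_def)
  then show ?thesis by (rule that(2))
qed

lemma length_rg_pieces_GsK [simp]: "length (rg_pieces (GsK D S)) = 6 * ncr D + 2"
  by (simp add: GsK_def length_concat_map_const_length[where m = 4])

lemma nth_GsK_marking: "rg_pieces (GsK D S) ! 0 = (PM, (Hd, Tl, []))"
  by (simp add: GsK_def)

lemma nth_GsK_seg: "j < 2 * ncr D + 1 \<Longrightarrow> rg_pieces (GsK D S) ! Suc j = (PV, seg_pieces D ! j)"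
  by (simp add: GsK_def nth_append)

lemma nth_GsK_smoothing: "c < ncr D \<Longrightarrow> k < 4 \<Longrightarrow>
    rg_pieces (GsK D S) ! (2 * ncr D + 2 + (4 * c + k)) =
      (if k < 2 then (PA c, smoothing_piece D c (c \<in> S) k)
       else (PS c, smoothing_piece D c (c \<notin> S) (k - 2)))"
proof -
  assume ck: "c < ncr D" "k < 4"
  let ?h = "\<lambda>c. map (\<lambda>(p, q). (PA c, (Cr c p, Cr c q,
                 if oriented_smoothing D c (c \<in> S) then [] else [Arr True])))
              (smooth_arcs D c (c \<in> S)) @
          map (\<lambda>(p, q). (PS c, (Cr c p, Cr c q,
                 if oriented_smoothing D c (c \<in> S) then [Arr True] else [])))
              (smooth_arcs D c (c \<notin> S))"
  have "concat (map ?h [0..<ncr D]) ! (4 * c + k) = ?h ([0..<ncr D] ! c) ! k"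
    by (rule nth_concat_map_const_length) (use ck in auto)
  moreover have "rg_pieces (GsK D S) ! (2 * ncr D + 2 + (4 * c + k)) =
      concat (map ?h [0..<ncr D]) ! (4 * c + k)"
    by (simp add: GsK_def nth_append)
  ultimately show ?thesis using ck
    by (auto simp: nth_append smoothing_piece_def oriented_smoothing_Not split: prod.splits)
qed

lemma GsK_index_cases:
  assumes "(i::nat) < 6 * n + 2"
  obtains "i = 0" | j where "i = Suc j" "j < 2 * n + 1"
    | c k where "c < n" "k < 4" "i = 2 * n + 2 + (4 * c + k)"
proof (cases "i < 2 * n + 2")
  case True
  then show ?thesis using that(1,2) by (cases i) simp_all
next
  case False
  define r where "r = i - (2 * n + 2)"
  have "r div 4 < n" "r mod 4 < 4" "i = 2 * n + 2 + (4 * (r div 4) + r mod 4)"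
    using False assms by (simp_all add: r_def)
  then show ?thesis by (rule that(3))
qed

lemma kind_GsK: "i < 6 * ncr D + 2 \<Longrightarrow> fst (rg_pieces (GsK D S) ! i) =
    (if i = 0 then PM else if i < 2 * ncr D + 2 then PV
     else if (i - (2 * ncr D + 2)) mod 4 < 2 then PA ((i - (2 * ncr D + 2)) div 4)
     else PS ((i - (2 * ncr D + 2)) div 4))"
proof (erule GsK_index_cases)
  fix c k
  assume "c < ncr D" "k < 4" "i = 2 * ncr D + 2 + (4 * c + k)"
  then show ?thesis using nth_GsK_smoothing[of c D k S] by simp
qed (simp_all add: nth_GsK_marking nth_GsK_seg)

lemma mark_idx_GsK: "mark_idx (GsK D S) = 0"
proof -
  have "i < length (rg_pieces (GsK D S)) \<and> fst (rg_pieces (GsK D S) ! i) = PM \<longleftrightarrow> i = 0" for i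
    by (auto simp: nth_GsK_marking kind_GsK split: if_splits)
  then show ?thesis unfolding mark_idx_def by simp
qed

text \<open>Position in \<open>G\<^sup>s\<^sub>K\<close> of the \<open>i\<close>-th piece of the state \<open>S \<triangle> F\<close>: diagram arcs sit after the
  marking piece; at a crossing in \<open>F\<close> the smoothing arc is the free edge-boundary arc
  (offset 2), otherwise the attaching arc (offset 0).\<close>

definition bdry_pos :: "nat \<Rightarrow> nat set \<Rightarrow> nat \<Rightarrow> nat" where
  "bdry_pos n F i = (if i < 2 * n + 1 then Suc i else
     2 * n + 2 + (4 * ((i - (2 * n + 1)) div 2) +
       ((if (i - (2 * n + 1)) div 2 \<in> F then 2 else 0) + (i - (2 * n + 1)) mod 2)))"

lemma bdry_pos_seg: "i < 2 * n + 1 \<Longrightarrow> bdry_pos n F i = Suc i"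
  by (simp add: bdry_pos_def)

lemma bdry_pos_smoothing: "k < 2 \<Longrightarrow> bdry_pos n F (2 * n + 1 + (2 * c + k)) =
    2 * n + 2 + (4 * c + ((if c \<in> F then 2 else 0) + k))"
  by (simp add: bdry_pos_def)

lemma zero_notin_bdry_pos_image: "0 \<notin> bdry_pos n F ` A"
  by (auto simp: bdry_pos_def)

lemma inj_on_bdry_pos: "inj_on (bdry_pos n F) {..<4 * n + 1}"
proof (rule inj_on_inverseI)
  let ?r = "\<lambda>v. v - (2 * n + 2)"
  fix i :: nat
  assume "i \<in> {..<4 * n + 1}"
  then have "i < 4 * n + 1" by simp
  then show "(\<lambda>v. if v < 2 * n + 2 then v - 1 else 2 * n + 1 + (2 * (?r v div 4) + ?r v mod 2))
      (bdry_pos n F i) = i"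
  proof (cases rule: state_index_cases)
    case 1
    then show ?thesis by (simp add: bdry_pos_seg)
  next
    case (2 c k)
    then have "bdry_pos n F i = 2 * n + 2 + (4 * c + ((if c \<in> F then 2 else 0) + k))"
      by (simp only: bdry_pos_smoothing)
    moreover have "(4 * c + ((if c \<in> F then 2 else 0) + k)) div 4 = c"
      using 2 by (cases "c \<in> F") simp_all
    moreover have "(4 * c + ((if c \<in> F then 2 else 0) + k)) mod 2 = k"
      using 2 by (cases "c \<in> F") presburger+
    ultimately show ?thesis using 2 by simp
  qed
qed
lemma nth_rg_P: "i < length (rg_pieces G) \<Longrightarrow> rg_P G ! i = snd (rg_pieces G ! i)"
  by (simp add: rg_P_def)

lemma nth_GsK_bdry_pos:
  assumes "i < 4 * ncr D + 1"
  shows "rg_P (GsK D S) ! bdry_pos (ncr D) F i = state_pieces D (sym_diff S F) ! i"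
  using assms
proof (cases rule: state_index_cases)
  case 1
  then show ?thesis
    by (simp add: nth_rg_P bdry_pos_seg nth_GsK_seg nth_state_pieces_seg)
next
  case (2 c k)
  let ?k = "(if c \<in> F then 2 else 0) + k"
  have "?k < 4" using 2 by simp
  have "bdry_pos (ncr D) F i = 2 * ncr D + 2 + (4 * c + ?k)"
    using 2 by (simp only: bdry_pos_smoothing)
  moreover have "2 * ncr D + 2 + (4 * c + ?k) < length (rg_pieces (GsK D S))" using 2 by simp
  ultimately show ?thesis
    using 2 nth_GsK_smoothing[OF 2(1) \<open>?k < 4\<close>, of S]
      nth_state_pieces_smoothing[OF 2(1,2), of "sym_diff S F"]
    by (simp add: nth_rg_P)
qed

lemma smoothing_in_bdry_idx_GsK: "c < ncr D \<Longrightarrow> k < 4 \<Longrightarrow>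
    2 * ncr D + 2 + (4 * c + k) \<in> bdry_idx (GsK D S) F \<longleftrightarrow> (k < 2 \<longleftrightarrow> c \<notin> F)"
proof -
  assume ck: "c < ncr D" "k < 4"
  then have "2 * ncr D + 2 + (4 * c + k) < length (rg_pieces (GsK D S))" by simp
  then show ?thesis unfolding bdry_idx_def mem_Collect_eq nth_GsK_smoothing[OF ck] by simp
qed

lemma bdry_idx_GsK: "bdry_idx (GsK D S) F = insert 0 (bdry_pos (ncr D) F ` {..<4 * ncr D + 1})"
proof (intro set_eqI iffI)
  fix i
  assume i: "i \<in> bdry_idx (GsK D S) F"
  then have "i < 6 * ncr D + 2" by (simp add: bdry_idx_def)
  then show "i \<in> insert 0 (bdry_pos (ncr D) F ` {..<4 * ncr D + 1})"
  proof (cases rule: GsK_index_cases)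
    case (2 j)
    then have "i = bdry_pos (ncr D) F j" by (simp add: bdry_pos_seg)
    then show ?thesis using 2 by simp
  next
    case (3 c k)
    define k' where "k' = (if c \<in> F then k - 2 else k)"
    have "k < 2 \<longleftrightarrow> c \<notin> F"
      using 3 i smoothing_in_bdry_idx_GsK[of c D k S F] by simp
    then have "k' < 2" "k = (if c \<in> F then 2 else 0) + k'"
      using 3 by (auto simp: k'_def)
    then have "i = bdry_pos (ncr D) F (2 * ncr D + 1 + (2 * c + k'))"
      using 3 by (simp only: bdry_pos_smoothing)
    moreover have "2 * ncr D + 1 + (2 * c + k') < 4 * ncr D + 1" using 3 \<open>k' < 2\<close> by simp
    ultimately show ?thesis by blast
  qed simp
next
  fix i
  assume "i \<in> insert 0 (bdry_pos (ncr D) F ` {..<4 * ncr D + 1})"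
  then consider "i = 0" | j where "j < 4 * ncr D + 1" "i = bdry_pos (ncr D) F j" by auto
  then show "i \<in> bdry_idx (GsK D S) F"
  proof cases
    case 1
    then show ?thesis by (simp add: bdry_idx_def nth_GsK_marking)
  next
    case 2
    from 2(1) show ?thesis
    proof (cases rule: state_index_cases)
      case 1
      then show ?thesis using 2 by (simp add: bdry_idx_def bdry_pos_seg nth_GsK_seg)
    next
      case (2 c k)
      then have "i = 2 * ncr D + 2 + (4 * c + ((if c \<in> F then 2 else 0) + k))"
        using \<open>i = bdry_pos (ncr D) F j\<close> by (simp only: bdry_pos_smoothing)
      then show ?thesis
        using 2 smoothing_in_bdry_idx_GsK[of c D "(if c \<in> F then 2 else 0) + k" S F] by simp
    qed
  qed
qed

definition is_over :: "xend \<Rightarrow> bool" where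
  "is_over h \<longleftrightarrow> h = InO \<or> h = OutO"

definition is_out :: "xend \<Rightarrow> bool" where
  "is_out h \<longleftrightarrow> h = OutO \<or> h = OutU"

lemma seg_start_eq_Cr: "j < 2 * ncr D + 1 \<Longrightarrow> length (gseq D) = 2 * ncr D \<Longrightarrow>
    seg_start D j = Cr c h \<longleftrightarrow> j \<ge> 1 \<and> gseq D ! (j - 1) = (c, is_over h) \<and> is_out h"
  by (cases "gseq D ! (j - 1)"; cases h) (auto simp: seg_start_def is_over_def is_out_def)

lemma seg_end_eq_Cr: "j < 2 * ncr D + 1 \<Longrightarrow>
    seg_end D j = Cr c h \<longleftrightarrow> j < 2 * ncr D \<and> gseq D ! j = (c, is_over h) \<and> \<not> is_out h"
  by (cases "gseq D ! j"; cases h) (auto simp: seg_end_def is_over_def is_out_def)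

lemma seg_start_eq_Tl: "seg_start D j = Tl \<longleftrightarrow> j = 0"
  by (cases "gseq D ! (j - 1)") (auto simp: seg_start_def)

lemma seg_start_neq_Hd: "seg_start D j \<noteq> Hd"
  by (cases "gseq D ! (j - 1)") (auto simp: seg_start_def)

lemma seg_end_eq_Hd: "seg_end D j = Hd \<longleftrightarrow> j = 2 * ncr D"
  by (cases "gseq D ! j") (auto simp: seg_end_def)

lemma seg_end_neq_Tl: "seg_end D j \<noteq> Tl"
  by (cases "gseq D ! j") (auto simp: seg_end_def)

lemma psrc_state_seg: "j < 2 * ncr D + 1 \<Longrightarrow>
    psrc (state_pieces D S) (j, b) = (if b then seg_start D j else seg_end D j)"
  by (simp add: nth_state_pieces_seg nth_seg_pieces)

lemma psrc_state_smoothing: "c < ncr D \<Longrightarrow> k < 2 \<Longrightarrow>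
    psrc (state_pieces D S) (2 * ncr D + 1 + (2 * c + k), b) =
      Cr c (if b then fst (smooth_arcs D c (c \<in> S) ! k) else snd (smooth_arcs D c (c \<in> S) ! k))"
proof -
  assume ck: "c < ncr D" "k < 2"
  show ?thesis unfolding psrc.simps nth_state_pieces_smoothing[OF ck]
    by (simp add: smoothing_piece_def split: prod.splits)
qed

lemma smooth_arcs_end_unique:
  obtains k0 b0 where "k0 < 2" "\<And>k b. k < 2 \<Longrightarrow>
    (if b then fst (smooth_arcs D c a ! k) else snd (smooth_arcs D c a ! k)) = h
      \<longleftrightarrow> k = k0 \<and> b = b0"
proof -
  have "\<exists>k0\<in>{0::nat, 1}. \<exists>b0\<in>{True, False}. \<forall>k\<in>{0::nat, 1}. \<forall>b\<in>{True, False}.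
      (if b then fst (smooth_arcs D c a ! k) else snd (smooth_arcs D c a ! k)) = h
        \<longleftrightarrow> k = k0 \<and> b = b0"
    by (cases "csign D c"; cases a; cases h)
      (simp_all add: smooth_arcs_def ccw_ends_def Let_def ex_bool_eq all_bool_eq)
  then obtain k0 b0 where k0: "k0 \<in> {0::nat, 1}" and k0b0: "\<forall>k\<in>{0::nat, 1}. \<forall>b\<in>{True, False}.
      (if b then fst (smooth_arcs D c a ! k) else snd (smooth_arcs D c a ! k)) = h
        \<longleftrightarrow> k = k0 \<and> b = b0"
    by blast
  show ?thesis
  proof (rule that[of k0 b0])
    show "k0 < 2" using k0 by auto
    fix k b
    assume "k < (2::nat)"
    then have "k \<in> {0, 1}" by auto
    then show "(if b then fst (smooth_arcs D c a ! k) else snd (smooth_arcs D c a ! k)) = h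
        \<longleftrightarrow> k = k0 \<and> b = b0"
      using k0b0 by blast
  qed
qed

lemma length_gseq: "twisted_knotoid_diagram D \<Longrightarrow> length (gseq D) = 2 * ncr D"
proof -
  assume D: "twisted_knotoid_diagram D"
  then have "length (gseq D) = card (set (gseq D))"
    by (metis distinct_card twisted_knotoid_diagram_def)
  also have "\<dots> = 2 * ncr D"
    using D by (simp add: twisted_knotoid_diagram_def card_cartesian_product mult.commute)
  finally show ?thesis .
qed

lemma gseq_crossing_less: "twisted_knotoid_diagram D \<Longrightarrow> t < 2 * ncr D \<Longrightarrow>
    gseq D ! t = (c, ov) \<Longrightarrow> c < ncr D"
proof -
  assume D: "twisted_knotoid_diagram D" and "t < 2 * ncr D" "gseq D ! t = (c, ov)"
  then have "(c, ov) \<in> set (gseq D)" using length_gseq by (metis nth_mem)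
  then show ?thesis using D by (auto simp: twisted_knotoid_diagram_def)
qed

lemma gseq_passage_exists: "twisted_knotoid_diagram D \<Longrightarrow> c < ncr D \<Longrightarrow>
    \<exists>t < 2 * ncr D. gseq D ! t = (c, ov)"
proof -
  assume D: "twisted_knotoid_diagram D" and "c < ncr D"
  then have "(c, ov) \<in> set (gseq D)" by (auto simp: twisted_knotoid_diagram_def)
  then show ?thesis using length_gseq[OF D] by (metis in_set_conv_nth)
qed

lemma gseq_passage_unique: "twisted_knotoid_diagram D \<Longrightarrow> t < 2 * ncr D \<Longrightarrow>
    t' < 2 * ncr D \<Longrightarrow> gseq D ! t = gseq D ! t' \<Longrightarrow> t = t'"
  using length_gseq by (metis nth_eq_iff_index_eq twisted_knotoid_diagram_def)

lemma ends_at_state_Tl: "ends_at (state_pieces D S) Tl = {(0, True)}"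
proof (intro set_eqI iffI)
  fix x
  assume x: "x \<in> ends_at (state_pieces D S) Tl"
  obtain i b where ib: "x = (i, b)" by (cases x)
  have e: "psrc (state_pieces D S) (i, b) = Tl" and i: "i < 4 * ncr D + 1"
    using x ib by (auto simp: ends_at_def)
  from i show "x \<in> {(0, True)}"
  proof (cases rule: state_index_cases)
    case 1
    then have "(if b then seg_start D i else seg_end D i) = Tl"
      using e psrc_state_seg by metis
    then show ?thesis using ib by (cases b) (simp_all add: seg_start_eq_Tl seg_end_neq_Tl)
  qed (use e psrc_state_smoothing in simp)
qed (use psrc_state_seg[of 0 D S True] in \<open>simp add: ends_at_def seg_start_eq_Tl\<close>)

lemma ends_at_state_Hd: "ends_at (state_pieces D S) Hd = {(2 * ncr D, False)}"
proof (intro set_eqI iffI)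
  fix x
  assume x: "x \<in> ends_at (state_pieces D S) Hd"
  obtain i b where ib: "x = (i, b)" by (cases x)
  have e: "psrc (state_pieces D S) (i, b) = Hd" and i: "i < 4 * ncr D + 1"
    using x ib by (auto simp: ends_at_def)
  from i show "x \<in> {(2 * ncr D, False)}"
  proof (cases rule: state_index_cases)
    case 1
    then have "(if b then seg_start D i else seg_end D i) = Hd"
      using e psrc_state_seg by metis
    then show ?thesis using ib by (cases b) (simp_all add: seg_start_neq_Hd seg_end_eq_Hd)
  qed (use e psrc_state_smoothing in simp)
qed (use psrc_state_seg[of "2 * ncr D" D S False] in \<open>simp add: ends_at_def seg_end_eq_Hd\<close>)

lemma psrc_state_seg_eq_Cr:
  assumes D: "twisted_knotoid_diagram D" and i: "i < 2 * ncr D + 1"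
  shows "psrc (state_pieces D S) (i, b) = Cr c h \<longleftrightarrow>
    (\<exists>t < 2 * ncr D. gseq D ! t = (c, is_over h) \<and>
       (i, b) = (if is_out h then (Suc t, True) else (t, False)))"
proof (cases b)
  case True
  have "seg_start D i = Cr c h \<longleftrightarrow>
      (\<exists>t < 2 * ncr D. gseq D ! t = (c, is_over h) \<and> is_out h \<and> i = Suc t)"
    using i by (auto simp: seg_start_eq_Cr[OF i length_gseq[OF D]] intro!: exI[of _ "i - 1"])
  then show ?thesis using True psrc_state_seg[OF i, of S b] by auto
next
  case False
  have "seg_end D i = Cr c h \<longleftrightarrow>
      (\<exists>t < 2 * ncr D. gseq D ! t = (c, is_over h) \<and> \<not> is_out h \<and> i = t)"
    by (auto simp: seg_end_eq_Cr[OF i])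
  then show ?thesis using False psrc_state_seg[OF i, of S b] by auto
qed

text \<open>Away from the tail and the head every point of a state is the endpoint of exactly two
  piece ends: the diagram arc arriving at or leaving the crossing end, and the smoothing
  arc attached to it.\<close>

lemma even_card_ends_at_state_Cr:
  assumes D: "twisted_knotoid_diagram D"
  shows "even (card (ends_at (state_pieces D S) (Cr c h)))"
proof (cases "c < ncr D")
  case False
  have "psrc (state_pieces D S) (i, b) \<noteq> Cr c h" if "i < 4 * ncr D + 1" for i b
    using that
  proof (cases rule: state_index_cases)
    case 1
    then show ?thesis
      using False psrc_state_seg_eq_Cr[OF D 1] gseq_crossing_less[OF D] by blast
  next
    case (2 c' k)
    then show ?thesis using False psrc_state_smoothing[OF 2(1,2)] by auto
  qed
  then have "ends_at (state_pieces D S) (Cr c h) = {}" by (auto simp: ends_at_def)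
  then show ?thesis by simp
next
  case True
  obtain t where t: "t < 2 * ncr D" "gseq D ! t = (c, is_over h)"
    using gseq_passage_exists[OF D True] by blast
  obtain k0 b0 where k0: "k0 < 2" and kb: "\<And>k b. k < 2 \<Longrightarrow>
      (if b then fst (smooth_arcs D c (c \<in> S) ! k) else snd (smooth_arcs D c (c \<in> S) ! k)) = h
        \<longleftrightarrow> k = k0 \<and> b = b0"
    using smooth_arcs_end_unique[of D c "c \<in> S" h] by blast
  define s where "s = (if is_out h then (Suc t, True) else (t, False))"
  define a where "a = (2 * ncr D + 1 + (2 * c + k0), b0)"
  have "ends_at (state_pieces D S) (Cr c h) = {s, a}"
  proof (intro set_eqI iffI)
    fix x
    assume x: "x \<in> ends_at (state_pieces D S) (Cr c h)"
    obtain i b where ib: "x = (i, b)" by (cases x)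
    have e: "psrc (state_pieces D S) (i, b) = Cr c h" and i: "i < 4 * ncr D + 1"
      using x ib by (auto simp: ends_at_def)
    from i show "x \<in> {s, a}"
    proof (cases rule: state_index_cases)
      case 1
      then obtain t' where "t' < 2 * ncr D" "gseq D ! t' = (c, is_over h)"
        "(i, b) = (if is_out h then (Suc t', True) else (t', False))"
        using e psrc_state_seg_eq_Cr[OF D 1] by blast
      moreover have "t' = t" using gseq_passage_unique[OF D] t calculation by metis
      ultimately show ?thesis using ib by (simp add: s_def)
    next
      case (2 c' k)
      then have "c' = c" and "(if b then fst (smooth_arcs D c (c \<in> S) ! k)
          else snd (smooth_arcs D c (c \<in> S) ! k)) = h"
        using e psrc_state_smoothing[OF 2(1,2), of S b] by auto
      then show ?thesis using kb[OF 2(2)] 2(3) ib by (simp add: a_def)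
    qed
  next
    fix x
    assume "x \<in> {s, a}"
    moreover have "s \<in> ends_at (state_pieces D S) (Cr c h)"
    proof -
      have "fst s < 2 * ncr D + 1" using t by (simp add: s_def)
      then show ?thesis
        using psrc_state_seg_eq_Cr[OF D, of "fst s" S "snd s"] t by (auto simp: ends_at_def s_def)
    qed
    moreover have "a \<in> ends_at (state_pieces D S) (Cr c h)"
      using True k0 kb[OF k0, of b0] psrc_state_smoothing[OF True k0, of S b0]
      by (simp add: ends_at_def a_def)
    ultimately show "x \<in> ends_at (state_pieces D S) (Cr c h)" by blast
  qed
  moreover have "s \<noteq> a" using t by (auto simp: s_def a_def)
  ultimately show ?thesis by simp
qed

section \<open>The boundary of a spanning subgraph of \<open>G\<^sup>s\<^sub>K\<close>\<close>

locale spanning_subgraph =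
  fixes D :: tkd and S F :: "nat set"
  assumes diagram: "twisted_knotoid_diagram D"
begin

abbreviation "P \<equiv> state_pieces D (sym_diff S F)"
abbreviation "G \<equiv> GsK D S"
abbreviation "Q \<equiv> rg_P (GsK D S)"
abbreviation "\<sigma> \<equiv> bdry_pos (ncr D) F"
abbreviation "U \<equiv> {..<4 * ncr D + 1}"

definition arc_comp :: "nat set" where
  "arc_comp = (share_rel P U)\<^sup>* `` {0}"

abbreviation "marked_comp \<equiv> insert 0 (\<sigma> ` arc_comp)"

sublocale piece_embedding P Q U \<sigma>
proof
  show "inj_on \<sigma> U" by (rule inj_on_bdry_pos)
  fix i
  assume "i \<in> U"
  then have "i < 4 * ncr D + 1" by simp
  then show "Q ! \<sigma> i = P ! i" by (rule nth_GsK_bdry_pos)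
qed

lemma state_comps_eq: "state_comps D (sym_diff S F) = comps P U"
  unfolding state_comps_def length_state_pieces ..

lemma arc_comp_in_comps: "arc_comp \<in> comps P U"
  unfolding comps_eq_share_classes arc_comp_def by (rule image_eqI[where x = 0]) simp_all

lemma zero_in_arc_comp: "0 \<in> arc_comp"
  by (simp add: arc_comp_def)

lemma arc_comp_subset: "arc_comp \<subseteq> U"
  using arc_comp_in_comps by (rule comps_subset)

lemma comp_eq_arc_comp:
  assumes "C \<in> comps P U" "0 \<in> C"
  shows "C = arc_comp"
proof -
  obtain x where "C = (share_rel P U)\<^sup>* `` {x}"
    using assms(1) by (auto simp: comps_eq_share_classes)
  moreover have "(x, 0) \<in> (share_rel P U)\<^sup>*" using assms(2) calculation by blast
  ultimately show ?thesis unfolding arc_comp_def by (simp add: share_class_eq)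
qed

lemma state_arc_eq: "state_arc D (sym_diff S F) = arc_comp"
  unfolding state_arc_def state_comps_eq
proof (rule the_equality)
  show "arc_comp \<in> comps P U \<and> 0 \<in> arc_comp"
    using arc_comp_in_comps zero_in_arc_comp by simp
  show "C = arc_comp" if "C \<in> comps P U \<and> 0 \<in> C" for C
    using that comp_eq_arc_comp by simp
qed

lemma state_loops_eq: "state_loops D (sym_diff S F) = comps P U - {arc_comp}"
proof -
  have "C \<in> comps P U \<Longrightarrow> 0 \<notin> C \<longleftrightarrow> C \<noteq> arc_comp" for C
    using comp_eq_arc_comp zero_in_arc_comp by metis
  then show ?thesis unfolding state_loops_def state_comps_eq by blast
qed

lemma head_piece_in_arc_comp: "2 * ncr D \<in> arc_comp"
proof -
  have "even (card (ends_at P p))" if "p \<noteq> Tl" "p \<noteq> Hd" for p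
    using that even_card_ends_at_state_Cr[OF diagram] by (cases p) auto
  then have "(0, 2 * ncr D) \<in> (share_rel P {..<length P})\<^sup>*"
    by (intro unique_ends_connected[of P Tl 0 True Hd "2 * ncr D" False])
      (simp_all add: ends_at_state_Tl ends_at_state_Hd)
  then show ?thesis by (simp add: arc_comp_def)
qed

lemma nth_Q_marking: "Q ! 0 = (Hd, Tl, [])"
  by (simp add: nth_rg_P nth_GsK_marking)

text \<open>Only the tail and the head piece of the state meet the marking piece.\<close>

lemma share_marking_imp_in_arc_comp: "i \<in> U \<Longrightarrow> share Q 0 (\<sigma> i) \<Longrightarrow> i \<in> arc_comp"
proof -
  assume i: "i \<in> U" and "share Q 0 (\<sigma> i)"
  then have "psrc P (i, True) \<in> {Tl, Hd} \<or> psrc P (i, False) \<in> {Tl, Hd}"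
    by (auto simp: share_def nth_eq nth_Q_marking)
  then obtain b where "psrc P (i, b) \<in> {Tl, Hd}" by blast
  then have "(i, b) \<in> ends_at P Tl \<or> (i, b) \<in> ends_at P Hd"
    using i by (auto simp: ends_at_def)
  then have "i = 0 \<or> i = 2 * ncr D"
    by (auto simp: ends_at_state_Tl ends_at_state_Hd)
  then show ?thesis using zero_in_arc_comp head_piece_in_arc_comp by blast
qed

lemma share_marking_tail_piece: "share Q 0 (\<sigma> 0)"
  using psrc_state_seg[of 0 D "sym_diff S F" True]
  by (simp add: share_def nth_eq nth_Q_marking seg_start_eq_Tl)

lemma bdry_comps_eq:
  "bdry_comps G F = insert marked_comp ((\<lambda>C. \<sigma> ` C) ` comps P U - {\<sigma> ` arc_comp})"
proof -
  have "bdry_comps G F = comps Q (insert 0 (\<sigma> ` U))"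
    by (simp add: bdry_comps_def bdry_idx_GsK)
  also have "\<dots> = insert marked_comp (comps Q (\<sigma> ` U) - {\<sigma> ` arc_comp})"
  proof (rule comps_insert_attached)
    show "\<sigma> ` arc_comp \<in> comps Q (\<sigma> ` U)" using comps_image arc_comp_in_comps by simp
    show "\<sigma> 0 \<in> \<sigma> ` arc_comp" using zero_in_arc_comp by simp
    show "share Q 0 (\<sigma> 0)" by (rule share_marking_tail_piece)
    show "j \<in> \<sigma> ` arc_comp" if "j \<in> \<sigma> ` U" "share Q 0 j" for j
      using that share_marking_imp_in_arc_comp by blast
  qed
  finally show ?thesis unfolding comps_image .
qed

lemma marked_comp_notin_image: "marked_comp \<notin> (\<lambda>C. \<sigma> ` C) ` X"
  using zero_notin_bdry_pos_image by (metis imageE insertI1)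

lemma circ_comps_eq_image_comps:
  "circ_comps G F = (\<lambda>C. \<sigma> ` C) ` comps P U - {\<sigma> ` arc_comp}"
proof -
  have "0 \<notin> C" if "C \<in> (\<lambda>C. \<sigma> ` C) ` comps P U - {\<sigma> ` arc_comp}" for C
    using that zero_notin_bdry_pos_image by blast
  then show ?thesis
    unfolding circ_comps_def bdry_comps_eq mark_idx_GsK by blast
qed

lemma circ_comps_eq: "circ_comps G F = (\<lambda>C. \<sigma> ` C) ` state_loops D (sym_diff S F)"
proof -
  have "(\<lambda>C. \<sigma> ` C) ` comps P U - {\<sigma> ` arc_comp} = (\<lambda>C. \<sigma> ` C) ` (comps P U - {arc_comp})"
    using inj_on_image_comps arc_comp_in_comps by (simp add: inj_on_image_set_diff)
  then show ?thesis by (simp add: circ_comps_eq_image_comps state_loops_eq)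
qed

lemma inj_on_image_state_loops: "inj_on (\<lambda>C. \<sigma> ` C) (state_loops D (sym_diff S F))"
  unfolding state_loops_eq using inj_on_image_comps by (rule inj_on_diff)

lemma card_bdry_comps: "card (bdry_comps G F) = card (state_loops D (sym_diff S F)) + 1"
proof -
  have "bdry_comps G F = insert marked_comp (circ_comps G F)"
    by (simp only: bdry_comps_eq circ_comps_eq_image_comps)
  moreover have "finite (circ_comps G F)"
    by (simp add: circ_comps_eq_image_comps finite_comps)
  moreover have "marked_comp \<notin> circ_comps G F"
    using marked_comp_notin_image by (simp add: circ_comps_eq)
  ultimately have "card (bdry_comps G F) = card (circ_comps G F) + 1" by simp
  also have "card (circ_comps G F) = card (state_loops D (sym_diff S F))"
    unfolding circ_comps_eq by (rule card_image[OF inj_on_image_state_loops])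
  finally show ?thesis .
qed

lemma prod_circ_comps_eq:
  "(\<Prod>f\<in>circ_comps G F. loop_val K Kh (loop_form Q f)) =
   (\<Prod>C\<in>state_loops D (sym_diff S F). loop_val K Kh (loop_form P C))"
proof -
  have "(\<Prod>f\<in>circ_comps G F. loop_val K Kh (loop_form Q f)) =
        (\<Prod>C\<in>state_loops D (sym_diff S F). loop_val K Kh (loop_form Q (\<sigma> ` C)))"
    unfolding circ_comps_eq by (rule prod.reindex[OF inj_on_image_state_loops, unfolded comp_def])
  also have "\<dots> = (\<Prod>C\<in>state_loops D (sym_diff S F). loop_val K Kh (loop_form P C))"
  proof (rule prod.cong[OF refl])
    fix C
    assume "C \<in> state_loops D (sym_diff S F)"
    then have "C \<in> comps P U" by (simp add: state_loops_eq)
    then show "loop_val K Kh (loop_form Q (\<sigma> ` C)) = loop_val K Kh (loop_form P C)"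
      using loop_form_image[OF comps_subset] by metis
  qed
  finally show ?thesis .
qed

lemma bdry_comp_eq_marked_comp:
  assumes "C \<in> bdry_comps G F" "0 \<in> C"
  shows "C = marked_comp"
proof -
  from assms(1) have "C = marked_comp \<or> C \<in> (\<lambda>C. \<sigma> ` C) ` comps P U"
    unfolding bdry_comps_eq by blast
  then show ?thesis using assms(2) zero_notin_bdry_pos_image by blast
qed

lemma marked_trail_imp_arc_trail:
  assumes "C \<in> bdry_comps G F" "0 \<in> C" "closed_trail Q ys" "covers ys C" "hd ys = (0, True)"
  obtains xs where "tl ys = map lift xs" "xs \<noteq> []" "trail P xs" "covers xs arc_comp"
    "psrc P (hd xs) = Tl" "ptgt P (last xs) = Hd"
proof -
  have "C = marked_comp" using assms(1,2) by (rule bdry_comp_eq_marked_comp)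
  obtain zs where ys: "ys = (0, True) # zs"
    using assms(3,5) by (cases ys) (auto simp: closed_trail_def)
  have "distinct (0 # map fst zs)" "insert 0 (set (map fst zs)) = marked_comp"
    using assms(4) \<open>C = marked_comp\<close> by (simp_all add: ys covers_def)
  then have zs_cover: "distinct (map fst zs)" "set (map fst zs) = \<sigma> ` arc_comp"
    using zero_notin_bdry_pos_image by (auto simp: insert_ident)
  then have "set (map fst zs) \<subseteq> \<sigma> ` U" using arc_comp_subset by blast
  then obtain xs where xs: "zs = map lift xs" "set (map fst xs) \<subseteq> U" by (rule obtain_lift)
  have "zs \<noteq> []" using zs_cover zero_in_arc_comp by auto
  then have "xs \<noteq> []" using xs by simp
  have "trail Q zs" "ptgt Q (0, True) = psrc Q (hd zs)" "ptgt Q (last zs) = psrc Q (0, True)"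
    using assms(3) \<open>zs \<noteq> []\<close> by (simp_all add: ys closed_trail_def trail_Cons)
  moreover have "fst (hd xs) \<in> set (map fst xs)" "fst (last xs) \<in> set (map fst xs)"
    using \<open>xs \<noteq> []\<close> by simp_all
  with xs(2) have "fst (hd xs) \<in> U" "fst (last xs) \<in> U" by blast+
  ultimately have "trail P xs" "psrc P (hd xs) = Tl" "ptgt P (last xs) = Hd"
    using xs \<open>xs \<noteq> []\<close> by (simp_all add: trail_lift psrc_lift ptgt_lift hd_map last_map nth_Q_marking)
  moreover have "covers xs arc_comp"
    using zs_cover covers_lift[OF xs(2) arc_comp_subset] xs(1) by (simp add: covers_def)
  ultimately show ?thesis using that xs(1) \<open>xs \<noteq> []\<close> ys by simp
qed

lemma arc_trail_imp_marked_trail: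
  assumes "xs \<noteq> []" "trail P xs" "covers xs arc_comp" "psrc P (hd xs) = Tl" "ptgt P (last xs) = Hd"
  shows "closed_trail Q ((0, True) # map lift xs)" "covers ((0, True) # map lift xs) marked_comp"
proof -
  have xsU: "set (map fst xs) \<subseteq> U" using assms(3) arc_comp_subset by (auto simp: covers_def)
  have "fst (hd xs) \<in> set (map fst xs)" "fst (last xs) \<in> set (map fst xs)"
    using assms(1) by simp_all
  then have "fst (hd xs) \<in> U" "fst (last xs) \<in> U" using xsU by blast+
  then show "closed_trail Q ((0, True) # map lift xs)"
    using assms trail_lift[OF xsU] psrc_lift ptgt_lift
    by (simp add: closed_trail_def trail_Cons hd_map last_map nth_Q_marking)
  have "covers (map lift xs) (\<sigma> ` arc_comp)" using covers_lift[OF xsU arc_comp_subset] assms(3) by simp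
  moreover have "0 \<notin> set (map fst (map lift xs))"
    using zero_notin_bdry_pos_image[of "ncr D" F "fst ` set xs"] by (simp add: lift_def image_image)
  ultimately show "covers ((0, True) # map lift xs) marked_comp" by (simp add: covers_def)
qed

lemma marked_index_eq: "marked_index G F = arc_index P (state_arc D (sym_diff S F))"
proof -
  have "(\<exists>C ys. C \<in> bdry_comps G F \<and> mark_idx G \<in> C \<and> closed_trail Q ys \<and> covers ys C \<and>
        hd ys = (mark_idx G, True) \<and> lin_equiv (tword Q (tl ys)) w) \<longleftrightarrow>
      (\<exists>xs. xs \<noteq> [] \<and> trail P xs \<and> covers xs arc_comp \<and>
        psrc P (hd xs) = Tl \<and> ptgt P (last xs) = Hd \<and> lin_equiv (tword P xs) w)" for w
  proof
    assume "\<exists>C ys. C \<in> bdry_comps G F \<and> mark_idx G \<in> C \<and> closed_trail Q ys \<and> covers ys C \<and>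
        hd ys = (mark_idx G, True) \<and> lin_equiv (tword Q (tl ys)) w"
    then obtain C ys where C: "C \<in> bdry_comps G F" "0 \<in> C" "closed_trail Q ys" "covers ys C"
      "hd ys = (0, True)" and w: "lin_equiv (tword Q (tl ys)) w"
      by (auto simp: mark_idx_GsK)
    obtain xs where "tl ys = map lift xs" "xs \<noteq> []" "trail P xs" "covers xs arc_comp"
      "psrc P (hd xs) = Tl" "ptgt P (last xs) = Hd"
      by (rule marked_trail_imp_arc_trail[OF C])
    moreover have "set (map fst xs) \<subseteq> U" using calculation(4) arc_comp_subset
      by (auto simp: covers_def)
    ultimately show "\<exists>xs. xs \<noteq> [] \<and> trail P xs \<and> covers xs arc_comp \<and>
        psrc P (hd xs) = Tl \<and> ptgt P (last xs) = Hd \<and> lin_equiv (tword P xs) w"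
      using w tword_lift by metis
  next
    assume "\<exists>xs. xs \<noteq> [] \<and> trail P xs \<and> covers xs arc_comp \<and>
        psrc P (hd xs) = Tl \<and> ptgt P (last xs) = Hd \<and> lin_equiv (tword P xs) w"
    then obtain xs where xs: "xs \<noteq> []" "trail P xs" "covers xs arc_comp"
      "psrc P (hd xs) = Tl" "ptgt P (last xs) = Hd" and w: "lin_equiv (tword P xs) w"
      by blast
    have "set (map fst xs) \<subseteq> U" using xs(3) arc_comp_subset by (auto simp: covers_def)
    then have "lin_equiv (tword Q (tl ((0, True) # map lift xs))) w" using w tword_lift by simp
    moreover have "marked_comp \<in> bdry_comps G F" by (simp add: bdry_comps_eq)
    ultimately show "\<exists>C ys. C \<in> bdry_comps G F \<and> mark_idx G \<in> C \<and> closed_trail Q ys \<and>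
        covers ys C \<and> hd ys = (mark_idx G, True) \<and> lin_equiv (tword Q (tl ys)) w"
      using arc_trail_imp_marked_trail[OF xs]
      by (intro exI[of _ marked_comp] exI[of _ "(0, True) # map lift xs"]) (simp add: mark_idx_GsK)
  qed
  then show ?thesis unfolding marked_index_def arc_index_def state_arc_eq by simp
qed

end

section \<open>Comparing the weights\<close>

lemma card_sym_diff:
  assumes "S \<subseteq> {..<n}" "F \<subseteq> {..<n}"
  shows "card (sym_diff S F) = card S - card (F \<inter> S) + card (F - S)"
    and "card (F \<inter> S) \<le> card S" and "card (F - S) \<le> n - card S"
proof -
  have fin: "finite S" "finite F" using assms finite_subset by blast+
  then have "card (sym_diff S F) = card (S - F) + card (F - S)"
    by (intro card_Un_disjoint) auto
  moreover have "card (S - F) = card S - card (F \<inter> S)"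
    using fin by (metis card_Diff_subset_Int inf_commute finite_Int)
  ultimately show "card (sym_diff S F) = card S - card (F \<inter> S) + card (F - S)" by simp
  show "card (F \<inter> S) \<le> card S" using fin by (intro card_mono) auto
  have "card (F - S) \<le> card ({..<n} - S)" using assms by (intro card_mono) auto
  also have "\<dots> = n - card S" using assms fin by (simp add: card_Diff_subset)
  finally show "card (F - S) \<le> n - card S" .
qed

lemma prod_bvec_GsK:
  assumes "F \<subseteq> {..<ncr D}"
  shows "(\<Prod>e\<in>F. bvec (GsK D S) A B e) = (B / A) ^ card (F \<inter> S) * (A / B) ^ card (F - S)"
proof -
  have "finite F" using assms finite_subset by blast
  have "(\<Prod>e\<in>F. bvec (GsK D S) A B e) = (\<Prod>e\<in>F. if e \<in> S then B / A else A / B)"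
    by (simp add: bvec_def GsK_def)
  also have "\<dots> = (\<Prod>e\<in>F \<inter> S. B / A) * (\<Prod>e\<in>F - S. A / B)"
    using \<open>finite F\<close> by (simp add: prod.If_cases Int_def Diff_eq)
  finally show ?thesis by simp
qed

lemma epos_GsK: "S \<subseteq> {..<ncr D} \<Longrightarrow> epos (GsK D S) = card S"
proof -
  assume "S \<subseteq> {..<ncr D}"
  then have "{e \<in> {..<ncr D}. e \<in> S} = S" by auto
  then show ?thesis by (simp add: epos_def GsK_def)
qed

lemma eneg_GsK: "S \<subseteq> {..<ncr D} \<Longrightarrow> eneg (GsK D S) = ncr D - card S"
proof -
  assume S: "S \<subseteq> {..<ncr D}"
  have "{e \<in> {..<ncr D}. e \<notin> S} = {..<ncr D} - S" by auto
  then show ?thesis using S by (simp add: eneg_def GsK_def card_Diff_subset finite_subset)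
qed

text \<open>Passing from \<open>S\<close> to \<open>S \<triangle> F\<close> removes \<open>p = |F \<inter> S|\<close> and adds \<open>q = |F - S|\<close>
  \<open>A\<close>-smoothings, and \<open>bc(F)\<close> exceeds the number of loops by one.\<close>

lemma weight_identity:
  fixes A B d :: "'a::field"
  assumes "A \<noteq> 0" "B \<noteq> 0" "d \<noteq> 0"
  shows "A ^ (a + q) * B ^ (m + p) * (d ^ c * X) * Y =
    A ^ (a + p) * B ^ (m + q) / d * (1 ^ k * ((B / A) ^ p * (A / B) ^ q) * d ^ (c + 1) * X * Y)"
proof -
  have "A ^ (a + q) * B ^ (m + p) = A ^ (a + p) * B ^ (m + q) * ((B / A) ^ p * (A / B) ^ q)"
    using assms by (simp add: power_add power_divide field_simps)
  moreover have "d ^ (c + 1) / d = d ^ c" using assms(3) by simp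
  ultimately show ?thesis using assms by (simp add: field_simps)
qed

lemma state_term_eq_Rt_term:
  fixes A B d :: "'a::field"
  assumes D: "twisted_knotoid_diagram D" and S: "S \<subseteq> {..<ncr D}" and F: "F \<subseteq> {..<ncr D}"
    and nz: "A \<noteq> 0" "B \<noteq> 0" "d \<noteq> 0"
  shows "A ^ card (sym_diff S F) * B ^ (ncr D - card (sym_diff S F)) *
      (\<Prod>C\<in>state_loops D (sym_diff S F).
          d * loop_val K Kh (loop_form (state_pieces D (sym_diff S F)) C)) *
      L (arc_index (state_pieces D (sym_diff S F)) (state_arc D (sym_diff S F)))
    = A ^ card S * B ^ (ncr D - card S) / d *
      (1 ^ rg_k (GsK D S) F * (\<Prod>e\<in>F. bvec (GsK D S) A B e) *
       d ^ card (bdry_comps (GsK D S) F) *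
       (\<Prod>f\<in>circ_comps (GsK D S) F. loop_val K Kh (loop_form (rg_P (GsK D S)) f)) *
       L (marked_index (GsK D S) F))"
proof -
  interpret spanning_subgraph D S F by unfold_locales (rule D)
  define a p m q where "a = card S - card (F \<inter> S)" and "p = card (F \<inter> S)"
    and "m = ncr D - card S - card (F - S)" and "q = card (F - S)"
  have "card S \<le> ncr D" using S by (metis card_lessThan card_mono finite_lessThan)
  then have cards: "card S = a + p" "ncr D - (a + p) = m + q"
    "card (sym_diff S F) = a + q" "ncr D - (a + q) = m + p"
    using card_sym_diff[OF S F] by (simp_all add: a_def p_def m_def q_def)
  show ?thesis
    unfolding prod.distrib prod_constant card_bdry_comps prod_circ_comps_eq marked_index_eq
      prod_bvec_GsK[OF F] p_def[symmetric] q_def[symmetric] cards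
    by (rule weight_identity[OF nz])
qed

lemma tbracket_eq_Rt:
  fixes A B d :: "'a::field"
  assumes D: "twisted_knotoid_diagram D" and S: "S \<subseteq> {..<ncr D}"
    and nz: "A \<noteq> 0" "B \<noteq> 0" "d \<noteq> 0"
  shows "tbracket D A B d K Kh L =
    A ^ epos (GsK D S) * B ^ eneg (GsK D S) / d * Rt (GsK D S) 1 (bvec (GsK D S) A B) d K Kh L"
proof -
  let ?T = "\<lambda>S'. A ^ card S' * B ^ (ncr D - card S') *
        (\<Prod>C\<in>state_loops D S'. d * loop_val K Kh (loop_form (state_pieces D S') C)) *
        L (arc_index (state_pieces D S') (state_arc D S'))"
  let ?R = "\<lambda>F. 1 ^ rg_k (GsK D S) F * (\<Prod>e\<in>F. bvec (GsK D S) A B e) *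
        d ^ card (bdry_comps (GsK D S) F) *
        (\<Prod>f\<in>circ_comps (GsK D S) F. loop_val K Kh (loop_form (rg_P (GsK D S)) f)) *
        L (marked_index (GsK D S) F)"
  have "tbracket D A B d K Kh L = (\<Sum>S'\<in>Pow {..<ncr D}. ?T S')"
    by (simp add: tbracket_def)
  also have "\<dots> = (\<Sum>F\<in>Pow {..<ncr D}. ?T (sym_diff S F))"
  proof -
    have "sym_diff S (sym_diff S F) = F" for F by blast
    then show ?thesis
      by (intro sum.reindex_bij_witness[where i = "sym_diff S" and j = "sym_diff S"]) (use S in auto)
  qed
  also have "\<dots> = (\<Sum>F\<in>Pow {..<ncr D}. A ^ card S * B ^ (ncr D - card S) / d * ?R F)"
    using state_term_eq_Rt_term[OF D S _ nz] by (intro sum.cong refl) auto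
  also have "\<dots> = A ^ card S * B ^ (ncr D - card S) / d * Rt (GsK D S) 1 (bvec (GsK D S) A B) d K Kh L"
    by (simp add: Rt_def GsK_def sum_distrib_left)
  finally show ?thesis using epos_GsK[OF S] eneg_GsK[OF S] by simp
qed

theorem mainTheorem12:
  fixes D :: tkd and S :: "nat set"
    and A B d :: "'a::field" and K L :: "nat \<Rightarrow> 'a" and Kh :: 'a
  assumes "twisted_knotoid_diagram D"
    and "S \<subseteq> {..<ncr D}"
    and "A \<noteq> 0" and "B \<noteq> 0" and "d \<noteq> 0"
    and "K 0 = 1" and "L 0 = 1"
  shows "tbracket D A B d K Kh L =
           A ^ epos (GsK D S) * B ^ eneg (GsK D S) / d *
           Rt (GsK D S) 1 (bvec (GsK D S) A B) d K Kh L
         \<and> (- (A ^ 2) - inverse (A ^ 2) \<noteq> 0 \<longrightarrow>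
             tbracketA D A K Kh L =
             A powi (int (epos (GsK D S)) - int (eneg (GsK D S))) / (- (A ^ 2) - inverse (A ^ 2)) *
             Rt (GsK D S) 1 (bvec (GsK D S) A (inverse A)) (- (A ^ 2) - inverse (A ^ 2)) K Kh L)"
proof (intro conjI impI)
  show "tbracket D A B d K Kh L =
      A ^ epos (GsK D S) * B ^ eneg (GsK D S) / d * Rt (GsK D S) 1 (bvec (GsK D S) A B) d K Kh L"
    using assms by (intro tbracket_eq_Rt)
  assume "- (A ^ 2) - inverse (A ^ 2) \<noteq> 0"
  moreover have "A ^ epos (GsK D S) * inverse A ^ eneg (GsK D S) =
      A powi (int (epos (GsK D S)) - int (eneg (GsK D S)))"
    using assms(3) by (simp add: power_int_diff power_inverse divide_inverse)
  ultimately show "tbracketA D A K Kh L =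
      A powi (int (epos (GsK D S)) - int (eneg (GsK D S))) / (- (A ^ 2) - inverse (A ^ 2)) *
      Rt (GsK D S) 1 (bvec (GsK D S) A (inverse A)) (- (A ^ 2) - inverse (A ^ 2)) K Kh L"
    using tbracket_eq_Rt[OF assms(1,2,3), of "inverse A"] assms(3)
    unfolding tbracketA_def by simp
qed

end
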